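(* If $q=2^k$ with $k>1$ then $f(X):=X^{q+2}+bX^q+cX$ does not permute $\mathbb{F}_{q^2}$ for any $b,c\in\mathbb{F}_{q^2}$ with $b\ne 0$. *)

theory Defs
  imports Main
begin

end

theory Submission
  imports Defs "HOL-Computational_Algebra.Polynomial" "HOL-Computational_Algebra.Primes"
begin

(* The field has characteristic 2, and the substitution x = \<beta> t with \<beta>^2 = b reduces the claim
   to b = 1, i.e. to g(x) = x^(q+2) + x^q + c x.  Expanding g(x + d) - g(x) for x = z/w, d = 1/w
   shows g(z/w) = g((z + 1)/w) as soon as z^q + z^2 = 1 + w^2 + c w^(q+1) for some w \<noteq> 0.

   If k is even, q is a power of 4, a root \<omega> of \<omega>^2 + \<omega> + 1 satisfies \<omega>^q + \<omega>^2 = 1, and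
   w = 1/c, z = w + \<omega> is a solution.  If k = 2m + 1 is odd, the additive map z \<mapsto> z^q + z^2
   has kernel inside F_4, so its image is the kernel of the trace T from F_(q^2) to F_4, and we
   need T(1 + w^2 + c w^(q+1)) = 1 + T(w)^2 + T(c w^(q+1)) = 0 for some w.  Otherwise the set
   {w. T(c w^(q+1)) = 1} would equal {w. T(w) \<noteq> 0}; but the first set is a union of fibres of
   the norm w \<mapsto> w^(q+1), all of size q + 1, while the second has 3 * 4^(2m) elements. *)

subsection \<open>Counting fibres\<close>

lemma card_eq_sum_card_fibers:
  assumes "finite A"
  shows "card A = (\<Sum>y\<in>f ` A. card {x\<in>A. f x = y})"
  using sum_fun_comp[of A "f ` A" f "\<lambda>_. 1::nat"] assms by simp

lemma card_fibers_eq_if_tight: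
  assumes "finite A" and "card (f ` A) \<le> n" and "\<And>y. card {x\<in>A. f x = y} \<le> m"
    and "card A = n * m" and "x \<in> A"
  shows "card {x'\<in>A. f x' = f x} = m"
proof (rule ccontr)
  assume "card {x'\<in>A. f x' = f x} \<noteq> m"
  with assms(3) have short: "card {x'\<in>A. f x' = f x} < m"
    using le_neq_implies_less by blast
  have "card A = (\<Sum>y\<in>f ` A. card {x\<in>A. f x = y})"
    using assms(1) by (rule card_eq_sum_card_fibers)
  also have "\<dots> < (\<Sum>y\<in>f ` A. m)"
    by (rule sum_strict_mono_ex1) (use assms short in auto)
  also have "\<dots> \<le> n * m"
    using assms(2) by simp
  finally show False
    using assms(4) by simp
qed

lemma dvd_card_if_union_of_fibers:
  assumes "finite A" and "\<And>x. x \<in> A \<Longrightarrow> card {x'\<in>A. f x' = f x} = m" and "S \<subseteq> A"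
    and "\<And>x x'. x \<in> S \<Longrightarrow> x' \<in> A \<Longrightarrow> f x' = f x \<Longrightarrow> x' \<in> S"
  shows "m dvd card S"
proof -
  have "card S = (\<Sum>y\<in>f ` S. card {x\<in>S. f x = y})"
    using assms(1,3) by (intro card_eq_sum_card_fibers) (rule finite_subset)
  also have "\<dots> = (\<Sum>y\<in>f ` S. m)"
  proof (rule sum.cong)
    fix y assume "y \<in> f ` S"
    then obtain x where "x \<in> S" "y = f x" by blast
    then have "{x'\<in>S. f x' = y} = {x'\<in>A. f x' = f x}"
      using assms(3,4) by blast
    then show "card {x'\<in>S. f x' = y} = m"
      using assms(2,3) \<open>x \<in> S\<close> by auto
  qed simp
  finally show ?thesis
    by simp
qed

lemma card_eq_card_kernel_mult_card_range:
  fixes f :: "'a::{ab_group_add, finite} \<Rightarrow> 'b::ab_group_add"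
  assumes add: "\<And>x y. f (x + y) = f x + f y"
  shows "card (UNIV :: 'a set) = card {x. f x = 0} * card (range f)"
proof -
  have fiber: "{x. f x = f x0} = (+) x0 ` {x. f x = 0}" for x0
  proof (intro equalityI subsetI)
    fix x assume "x \<in> {x. f x = f x0}"
    then have "f (x - x0) = 0"
      using add[of "x - x0" x0] by simp
    then show "x \<in> (+) x0 ` {x. f x = 0}"
      by (intro image_eqI[of _ _ "x - x0"]) auto
  qed (use add in auto)
  have "card (UNIV :: 'a set) = (\<Sum>y\<in>range f. card {x. f x = y})"
    using card_eq_sum_card_fibers[of UNIV f] by simp
  also have "\<dots> = (\<Sum>y\<in>range f. card {x. f x = 0})"
    by (intro sum.cong) (auto simp: fiber card_image)
  finally show ?thesis
    by simp
qed

lemma card_power_eq_poly_le: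
  fixes p :: "'a::field poly"
  assumes "degree p < n"
  shows "card {x. x ^ n = poly p x} \<le> n"
proof -
  have "degree (monom 1 n + - p) = n"
    using assms by (subst degree_add_eq_left) (simp_all add: degree_monom_eq)
  then have deg: "degree (monom 1 n - p) = n"
    by simp
  then have "monom 1 n - p \<noteq> 0"
    using assms by (metis degree_0 less_nat_zero_code)
  moreover have "{x. x ^ n = poly p x} = {x. poly (monom 1 n - p) x = 0}"
    by (simp add: poly_monom)
  ultimately show ?thesis
    using card_poly_roots_bound[of "monom 1 n - p"] deg by simp
qed

subsection \<open>Finite fields\<close>

lemma two_le_card_UNIV_field: "2 \<le> card (UNIV :: 'a::{field, finite} set)"
  using card_mono[of UNIV "{0, 1 :: 'a}"] by simp

(* The library's finite_field_power_card_eq_same needs the sort finite_field, which a type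
   of sort {field, finite} does not have. *)
lemma power_card_minus_one_eq_one:
  fixes x :: "'a::{field, finite}"
  assumes "x \<noteq> 0"
  shows "x ^ (card (UNIV :: 'a set) - 1) = 1"
proof -
  let ?U = "UNIV - {0::'a}"
  have "bij_betw ((*) x) ?U ?U"
    using assms by (intro bij_betw_byWitness[of _ "\<lambda>y. y / x"]) auto
  then have "(\<Prod>y\<in>?U. x * y) = \<Prod>?U"
    by (rule prod.reindex_bij_betw)
  then have "x ^ card ?U * \<Prod>?U = 1 * \<Prod>?U"
    by (simp add: prod.distrib)
  moreover have "\<Prod>?U \<noteq> 0"
    by simp
  ultimately show ?thesis
    by (simp add: card_Diff_singleton)
qed

lemma power_card_eq_self:
  fixes x :: "'a::{field, finite}"
  shows "x ^ card (UNIV :: 'a set) = x"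
proof (cases "x = 0")
  case False
  have "card (UNIV :: 'a set) = Suc (card (UNIV :: 'a set) - 1)"
    by (simp add: finite_UNIV_card_ge_0)
  then show ?thesis
    using power_card_minus_one_eq_one[OF False] by (metis power_Suc mult_1_right)
qed (simp add: zero_power finite_UNIV_card_ge_0)

lemma CHAR_eq_2_if_card_even:
  assumes "even (card (UNIV :: 'a::{field, finite} set))"
  shows "CHAR('a) = 2"
proof -
  have "(-1::'a) = (-1) ^ card (UNIV :: 'a set)"
    by (rule power_card_eq_self[symmetric])
  also have "\<dots> = 1"
    using assms by simp
  finally have "of_nat 2 = (0::'a)"
    by (simp add: eq_neg_iff_add_eq_0)
  then have "CHAR('a) dvd 2"
    by (simp only: of_nat_eq_0_iff_char_dvd)
  then show ?thesis
    by (metis CHAR_not_1' One_nat_def prime_nat_iff two_is_prime_nat)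
qed

lemma two_eq_zero_CHAR_2:
  assumes "CHAR('a::semiring_1) = 2"
  shows "(2::'a) = 0"
  using of_nat_CHAR[where 'a = 'a] assms by simp

lemma add_self_CHAR_2:
  assumes "CHAR('a::ring_1) = 2"
  shows "x + x = (0::'a)"
  using uminus_CHAR_2[OF assms, of x] by (metis add.right_inverse)

lemma add_power_CHAR_2:
  assumes "CHAR('a::comm_semiring_1) = 2" and "m = 2 ^ n"
  shows "(x + y :: 'a) ^ m = x ^ m + y ^ m"
  using assms by (intro freshmans_dream') simp_all

lemma surj_power2_CHAR_2:
  assumes "CHAR('a::{field, finite}) = 2"
  shows "surj (\<lambda>x::'a. x ^ 2)"
proof -
  have "inj (\<lambda>x::'a. x ^ 2)"
    using uminus_CHAR_2[OF assms] by (intro injI) (metis power2_eq_iff)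
  then show ?thesis
    by (simp add: finite_UNIV_inj_surj)
qed

lemma power_power_eq_self:
  fixes x :: "'a::monoid_mult"
  assumes "x ^ m = x"
  shows "x ^ m ^ n = x"
proof (induction n)
  case (Suc n)
  then show ?case
    using assms by (simp add: power_mult)
qed simp

lemma four_power_mod_3: "(4::nat) ^ n mod 3 = 1"
  using power_mod[of "4::nat" 3 n] by simp

lemma exists_primitive_cube_root_of_unity:
  assumes "3 dvd card (UNIV :: 'a::{field, finite} set) - 1"
  shows "\<exists>\<omega>::'a. \<omega> ^ 2 + \<omega> + 1 = 0"
proof -
  define n where "n = card (UNIV :: 'a set) - 1"
  obtain d where d: "n = 3 * d"
    using assms unfolding n_def by blast
  have "n \<noteq> 0"
    unfolding n_def using two_le_card_UNIV_field[where 'a = 'a] by simp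
  then have "0 < d" "d < n"
    using d by simp_all
  have "\<exists>x::'a. x \<noteq> 0 \<and> x ^ d \<noteq> 1"
  proof (rule ccontr)
    assume "\<not> ?thesis"
    then have "UNIV - {0} \<subseteq> {x::'a. x ^ d = poly [:1:] x}"
      by auto
    then have "card (UNIV - {0::'a}) \<le> card {x::'a. x ^ d = poly [:1:] x}"
      by (intro card_mono) auto
    also have "\<dots> \<le> d"
      using \<open>0 < d\<close> by (intro card_power_eq_poly_le) simp
    finally show False
      using \<open>d < n\<close> by (simp add: n_def card_Diff_singleton)
  qed
  then obtain x :: 'a where "x \<noteq> 0" and "x ^ d \<noteq> 1"
    by blast
  have "(x ^ d) ^ 3 = 1"
    using power_card_minus_one_eq_one[OF \<open>x \<noteq> 0\<close>] d
    by (simp add: n_def power_mult[symmetric] mult.commute)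
  moreover have "(x ^ d - 1) * ((x ^ d) ^ 2 + x ^ d + 1) = (x ^ d) ^ 3 - 1"
    by (simp add: algebra_simps power2_eq_square power3_eq_cube)
  ultimately show ?thesis
    using \<open>x ^ d \<noteq> 1\<close> by auto
qed

subsection \<open>The norm w \<mapsto> w^(q+1) on a field with q^2 elements\<close>

lemma norm_power_eq_self:
  fixes w :: "'a::{field, finite}"
  assumes "card (UNIV :: 'a set) = q ^ 2"
  shows "(w ^ (q + 1)) ^ q = w ^ (q + 1)"
proof -
  have "(w ^ (q + 1)) ^ q = w ^ (q ^ 2) * w ^ q"
    by (simp add: power2_eq_square power_mult[symmetric] power_add algebra_simps)
  also have "\<dots> = w * w ^ q"
    using power_card_eq_self[of w] assms by simp
  finally show ?thesis
    by simp
qed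

(* The q^2 - 1 units are mapped into the q - 1 units of F_q, with fibres of size at most q + 1. *)
lemma card_norm_fiber:
  fixes w :: "'a::{field, finite}"
  assumes card: "card (UNIV :: 'a set) = q ^ 2" and "w \<noteq> 0"
  shows "card {v. v ^ (q + 1) = w ^ (q + 1)} = q + 1"
proof -
  let ?A = "UNIV - {0::'a}" and ?N = "\<lambda>v::'a. v ^ (q + 1)"
  have "2 \<le> q"
    using two_le_card_UNIV_field[where 'a = 'a] card
    by (cases "q < 2") (auto simp: less_2_cases_iff)
  have "?N ` ?A \<subseteq> {l. l ^ q = poly [:0, 1:] l} - {0}"
    using norm_power_eq_self[OF card] by auto
  then have "card (?N ` ?A) \<le> card ({l::'a. l ^ q = poly [:0, 1:] l} - {0})"
    by (intro card_mono) auto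
  also have "\<dots> = card {l::'a. l ^ q = poly [:0, 1:] l} - 1"
    using \<open>2 \<le> q\<close> by (intro card_Diff_singleton) (simp add: zero_power)
  also have "\<dots> \<le> q - 1"
    using \<open>2 \<le> q\<close> card_power_eq_poly_le[of "[:0, 1::'a:]" q] by simp
  finally have image: "card (?N ` ?A) \<le> q - 1" .
  have fiber: "card {v\<in>?A. ?N v = l} \<le> q + 1" for l
  proof -
    have "card {v\<in>?A. ?N v = l} \<le> card {v. v ^ (q + 1) = poly [:l:] v}"
      by (intro card_mono) auto
    also have "\<dots> \<le> q + 1"
      by (intro card_power_eq_poly_le) simp
    finally show ?thesis .
  qed
  have "card ?A = (q - 1) * (q + 1)"
    using card \<open>2 \<le> q\<close> by (simp add: card_Diff_singleton power2_eq_square algebra_simps)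
  then have "card {v\<in>?A. ?N v = ?N w} = q + 1"
    using \<open>w \<noteq> 0\<close> by (intro card_fibers_eq_if_tight[OF _ image fiber]) auto
  moreover have "{v\<in>?A. ?N v = ?N w} = {v. ?N v = ?N w}"
    using \<open>w \<noteq> 0\<close> by auto
  ultimately show ?thesis
    by simp
qed

lemma dvd_card_if_norm_closed:
  fixes S :: "'a::{field, finite} set"
  assumes card: "card (UNIV :: 'a set) = q ^ 2" and "0 \<notin> S"
    and closed: "\<And>w v. w \<in> S \<Longrightarrow> v ^ (q + 1) = w ^ (q + 1) \<Longrightarrow> v \<in> S"
  shows "q + 1 dvd card S"
proof (rule dvd_card_if_union_of_fibers[of "UNIV - {0}" "\<lambda>v. v ^ (q + 1)"])
  fix w :: 'a assume "w \<in> UNIV - {0}"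
  then have "{v\<in>UNIV - {0}. v ^ (q + 1) = w ^ (q + 1)} = {v. v ^ (q + 1) = w ^ (q + 1)}"
    by auto
  then show "card {v\<in>UNIV - {0}. v ^ (q + 1) = w ^ (q + 1)} = q + 1"
    using card_norm_fiber[OF card] \<open>w \<in> UNIV - {0}\<close> by simp
qed (use assms in auto)

subsection \<open>The trace to F_4\<close>

(* For card UNIV = 4^k this is the trace of F_(4^k) over its subfield F_4. *)
definition trace_F4 :: "nat \<Rightarrow> 'a::comm_semiring_1 \<Rightarrow> 'a" where
  "trace_F4 k a = (\<Sum>i<k. a ^ 4 ^ i)"

lemma trace_F4_zero [simp]: "trace_F4 k 0 = 0"
  by (simp add: trace_F4_def power_0_left)

lemma trace_F4_one [simp]: "trace_F4 k 1 = of_nat k"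
  by (simp add: trace_F4_def)

lemma trace_F4_one_odd:
  assumes "CHAR('a::comm_semiring_1) = 2" and "odd k"
  shows "trace_F4 k (1::'a) = 1"
proof -
  obtain m where "k = 2 * m + 1"
    using assms(2) oddE by blast
  then show ?thesis
    using two_eq_zero_CHAR_2[OF assms(1)] by simp
qed

lemma trace_F4_add:
  assumes "CHAR('a::comm_semiring_1) = 2"
  shows "trace_F4 k (a + b :: 'a) = trace_F4 k a + trace_F4 k b"
proof -
  have "(a + b) ^ 4 ^ i = a ^ 4 ^ i + b ^ 4 ^ i" for i
    using assms by (rule add_power_CHAR_2[where n = "2 * i"]) (simp add: power_mult)
  then show ?thesis
    by (simp add: trace_F4_def sum.distrib)
qed

lemma trace_F4_power2:
  assumes "CHAR('a::comm_semiring_1) = 2"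
  shows "trace_F4 k (a ^ 2 :: 'a) = trace_F4 k a ^ 2"
proof -
  have "trace_F4 k a ^ 2 = (\<Sum>i<k. (a ^ 4 ^ i) ^ 2)"
    unfolding trace_F4_def using assms by (intro freshmans_dream_sum'[where n = 1]) simp_all
  then show ?thesis
    by (simp add: trace_F4_def power_mult[symmetric] mult.commute)
qed

lemma trace_F4_mult:
  assumes "c ^ 4 = c"
  shows "trace_F4 k (c * a :: 'a::comm_semiring_1) = c * trace_F4 k a"
  using power_power_eq_self[OF assms]
  by (simp add: trace_F4_def power_mult_distrib sum_distrib_left)

lemma trace_F4_power4:
  fixes a :: "'a::{field, finite}"
  assumes "card (UNIV :: 'a set) = 4 ^ k"
  shows "trace_F4 k (a ^ 4) = trace_F4 k a"
proof -
  have "a + trace_F4 k (a ^ 4) = (\<Sum>i<Suc k. a ^ 4 ^ i)"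
    by (subst sum.lessThan_Suc_shift) (simp add: trace_F4_def power_mult[symmetric] mult.commute)
  also have "\<dots> = a + trace_F4 k a"
    using power_card_eq_self[of a] assms by (simp add: trace_F4_def)
  finally show ?thesis
    by simp
qed

lemma trace_F4_power_4_power:
  fixes a :: "'a::{field, finite}"
  assumes "card (UNIV :: 'a set) = 4 ^ k"
  shows "trace_F4 k (a ^ 4 ^ n) = trace_F4 k a"
proof (induction n)
  case (Suc n)
  have "a ^ 4 ^ Suc n = (a ^ 4 ^ n) ^ 4"
    by (simp add: power_mult[symmetric] mult.commute)
  then show ?case
    using Suc trace_F4_power4[OF assms] by simp
qed simp

lemma trace_F4_power4_eq_self:
  fixes a :: "'a::{field, finite}"
  assumes "CHAR('a) = 2" and "card (UNIV :: 'a set) = 4 ^ k"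
  shows "trace_F4 k a ^ 4 = trace_F4 k a"
proof -
  have "trace_F4 k a ^ 4 = (trace_F4 k a ^ 2) ^ 2"
    by (simp flip: power_mult)
  also have "\<dots> = trace_F4 k ((a ^ 2) ^ 2)"
    by (simp only: trace_F4_power2[OF assms(1)])
  also have "\<dots> = trace_F4 k (a ^ 4)"
    by (simp flip: power_mult)
  finally show ?thesis
    using trace_F4_power4[OF assms(2)] by simp
qed

lemma card_trace_F4_kernel_le:
  assumes "0 < k"
  shows "card {a::'a::{field, finite}. trace_F4 k a = 0} \<le> 4 ^ (k - 1)"
proof -
  obtain j where k: "k = Suc j"
    using assms gr0_implies_Suc by blast
  define p :: "'a poly" where "p = - (\<Sum>i<j. monom 1 (4 ^ i))"
  have "degree p < 4 ^ j"
    unfolding p_def degree_minus by (intro degree_sum_less) (simp_all add: degree_monom_eq)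
  moreover have "{a. trace_F4 k a = 0} = {a. a ^ 4 ^ j = poly p a}"
  proof -
    have "trace_F4 k a = (\<Sum>i<j. a ^ 4 ^ i) + a ^ 4 ^ j" for a :: 'a
      by (simp add: trace_F4_def k)
    moreover have "poly p a = - (\<Sum>i<j. a ^ 4 ^ i)" for a
      by (simp add: p_def poly_sum poly_monom)
    ultimately show ?thesis
      by (simp add: add_eq_0_iff)
  qed
  ultimately show ?thesis
    using card_power_eq_poly_le[of p "4 ^ j"] k by simp
qed

lemma trace_F4_linearized_eq_0:
  fixes z :: "'a::{field, finite}"
  assumes "CHAR('a) = 2" and "card (UNIV :: 'a set) = 4 ^ k"
  shows "trace_F4 k (z ^ (2 * 4 ^ m) + z ^ 2) = 0"
proof -
  have "z ^ (2 * 4 ^ m) = (z ^ 4 ^ m) ^ 2"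
    by (simp flip: power_mult add: mult.commute)
  then have "trace_F4 k (z ^ (2 * 4 ^ m)) = trace_F4 k (z ^ 2)"
    using trace_F4_power2[OF assms(1)] trace_F4_power_4_power[OF assms(2)] by simp
  then show ?thesis
    using trace_F4_add[OF assms(1)] add_self_CHAR_2[OF assms(1)] by simp
qed

lemma linearized_kernel_subset_F4:
  fixes z :: "'a::{field, finite}"
  assumes "CHAR('a) = 2" and "card (UNIV :: 'a set) = 4 ^ (2 * m + 1)"
    and "z ^ (2 * 4 ^ m) + z ^ 2 = 0"
  shows "z ^ 4 = z"
proof -
  have "(z ^ 4 ^ m) ^ 2 = z ^ 2"
    using assms(3) uminus_CHAR_2[OF assms(1)]
    by (simp flip: power_mult add: mult.commute add_eq_0_iff)
  then have "z ^ 4 ^ m = z"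
    using uminus_CHAR_2[OF assms(1)] by (metis power2_eq_iff)
  then have "z ^ 4 ^ (2 * m) = z"
    by (simp add: mult_2 power_add power_mult)
  moreover have "z ^ 4 ^ (2 * m + 1) = (z ^ 4 ^ (2 * m)) ^ 4"
    by (simp add: power_mult[symmetric] mult.commute)
  ultimately show ?thesis
    using power_card_eq_self[of z] assms(2) by simp
qed

(* Here 2 * 4^m = q = 2^k with k = 2m + 1.  The kernel of z \<mapsto> z^q + z^2 has at most 4
   elements, so its image has at least 4^(k-1), and it lies in the kernel of the trace. *)
lemma range_linearized_eq_trace_F4_kernel:
  assumes "CHAR('a::{field, finite}) = 2" and card: "card (UNIV :: 'a set) = 4 ^ (2 * m + 1)"
  shows "range (\<lambda>z::'a. z ^ (2 * 4 ^ m) + z ^ 2) = {a. trace_F4 (2 * m + 1) a = 0}"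
    and "card {a::'a. trace_F4 (2 * m + 1) a = 0} = 4 ^ (2 * m)"
proof -
  let ?L = "\<lambda>z::'a. z ^ (2 * 4 ^ m) + z ^ 2" and ?K = "{a::'a. trace_F4 (2 * m + 1) a = 0}"
  have "(x + y) ^ (2 * 4 ^ m) = x ^ (2 * 4 ^ m) + y ^ (2 * 4 ^ m)" for x y :: 'a
    using assms(1) by (rule add_power_CHAR_2[where n = "2 * m + 1"]) (simp add: power_mult)
  moreover have "(x + y) ^ 2 = x ^ 2 + y ^ 2" for x y :: 'a
    using assms(1) by (rule add_power_CHAR_2[where n = 1]) simp
  ultimately have card_split: "card (UNIV :: 'a set) = card {z. ?L z = 0} * card (range ?L)"
    by (intro card_eq_card_kernel_mult_card_range) (simp add: algebra_simps)
  moreover have kernel: "card {z. ?L z = 0} \<le> 4"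
  proof -
    have "{z. ?L z = 0} \<subseteq> {u. u ^ 4 = poly [:0, 1:] u}"
      using linearized_kernel_subset_F4[OF assms] by auto
    then have "card {z. ?L z = 0} \<le> card {u::'a. u ^ 4 = poly [:0, 1:] u}"
      by (intro card_mono) auto
    also have "\<dots> \<le> 4"
      by (intro card_power_eq_poly_le) simp
    finally show ?thesis .
  qed
  have "card (UNIV :: 'a set) \<le> 4 * card (range ?L)"
    unfolding card_split using kernel by (rule mult_le_mono1)
  then have "4 ^ (2 * m) \<le> card (range ?L)"
    using card by simp
  moreover have "range ?L \<subseteq> ?K"
    using trace_F4_linearized_eq_0[OF assms] by auto
  moreover have "card ?K \<le> 4 ^ (2 * m)"
    using card_trace_F4_kernel_le[of "2 * m + 1", where 'a = 'a] by simp
  ultimately show "range ?L = ?K" and "card ?K = 4 ^ (2 * m)"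
    using card_subset_eq[of ?K "range ?L"] card_mono[of ?K "range ?L"] by auto
qed

lemma power_eq_1_if_F4_unit:
  fixes x :: "'a::field"
  assumes "x ^ 4 = x" and "x \<noteq> 0" and "3 dvd n"
  shows "x ^ n = 1"
proof -
  have "x ^ 4 = x * x ^ 3"
    by (simp add: power3_eq_cube power4_eq_xxxx algebra_simps)
  then have "x ^ 3 = 1"
    using assms(1,2) by simp
  moreover obtain r where "n = 3 * r"
    using assms(3) by blast
  ultimately show ?thesis
    by (simp add: power_mult)
qed

subsection \<open>Solving z^q + z^2 = 1 + w^2 + c w^(q+1)\<close>

(* Replacing w by D^2 w with D \<in> F_4^* keeps w^(q+1), as 3 divides q + 1, and multiplies
   T(w)^2 by D; the choice D = (1 + T(c w^(q+1))) / T(w)^2 makes the trace vanish. *)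
lemma exists_trace_F4_vanishing_if_trace_nonzero:
  fixes c w :: "'a::{field, finite}"
  assumes char: "CHAR('a) = 2" and card: "card (UNIV :: 'a set) = 4 ^ k" and "odd k"
    and "3 dvd q + 1" and "trace_F4 k w \<noteq> 0" and "trace_F4 k (c * w ^ (q + 1)) \<noteq> 1"
  shows "\<exists>v. trace_F4 k (1 + v ^ 2 + c * v ^ (q + 1)) = 0"
proof -
  let ?T = "trace_F4 k :: 'a \<Rightarrow> 'a"
  define A where "A = ?T w ^ 2"
  define C where "C = ?T (c * w ^ (q + 1))"
  define D where "D = (1 + C) / A"
  have "A \<noteq> 0"
    using assms(5) by (simp add: A_def)
  have "1 + C \<noteq> 0"
    using assms(6) uminus_CHAR_2[OF char, of 1] by (auto simp: C_def add_eq_0_iff)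
  have "A ^ 4 = A"
    using trace_F4_power4_eq_self[OF char card, of w] by (metis A_def power_mult mult.commute)
  moreover have "(1 + C) ^ 4 = 1 + C"
    using add_power_CHAR_2[OF char, of 4 2 1 C] trace_F4_power4_eq_self[OF char card]
    by (simp add: C_def)
  ultimately have "D ^ 4 = D"
    by (simp add: D_def power_divide)
  moreover have "D \<noteq> 0"
    using \<open>A \<noteq> 0\<close> \<open>1 + C \<noteq> 0\<close> by (simp add: D_def)
  ultimately have "D ^ (q + 1) = 1"
    using assms(4) by (rule power_eq_1_if_F4_unit)
  define v where "v = D ^ 2 * w"
  have "?T v = D ^ 2 * ?T w"
    unfolding v_def using \<open>D ^ 4 = D\<close> by (intro trace_F4_mult) (metis power_mult mult.commute)
  then have "?T v ^ 2 = 1 + C"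
    using \<open>D ^ 4 = D\<close> \<open>A \<noteq> 0\<close> by (simp add: power_mult_distrib D_def A_def flip: power_mult)
  moreover have "v ^ (q + 1) = (D ^ (q + 1)) ^ 2 * w ^ (q + 1)"
    unfolding v_def power_mult_distrib by (metis power_mult mult.commute)
  then have "v ^ (q + 1) = w ^ (q + 1)"
    using \<open>D ^ (q + 1) = 1\<close> by simp
  ultimately have "?T (1 + v ^ 2 + c * v ^ (q + 1)) = 1 + (1 + C) + C"
    using trace_F4_one_odd[OF char \<open>odd k\<close>]
    by (simp add: trace_F4_add[OF char] trace_F4_power2[OF char] C_def)
  also have "\<dots> = (1 + C) + (1 + C)"
    by (simp add: algebra_simps)
  also have "\<dots> = 0"
    using char by (rule add_self_CHAR_2)
  finally show ?thesis
    by blast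
qed

lemma two_mult_four_power_plus_1_not_dvd:
  assumes "0 < m"
  shows "\<not> 2 * 4 ^ m + 1 dvd 3 * (4::nat) ^ (2 * m)"
proof
  assume "2 * 4 ^ m + 1 dvd 3 * (4::nat) ^ (2 * m)"
  moreover have "coprime (2 * 4 ^ m + 1) ((2::nat) ^ (4 * m))"
    by simp
  then have "coprime (2 * 4 ^ m + 1) ((4::nat) ^ (2 * m))"
    by (simp add: power_mult)
  ultimately have "2 * 4 ^ m + 1 dvd (3::nat)"
    using coprime_dvd_mult_left_iff by blast
  moreover have "(4::nat) \<le> 4 ^ m"
    using power_increasing[of 1 m "4::nat"] assms by simp
  ultimately show False
    by (auto dest: dvd_imp_le)
qed

lemma exists_trace_F4_vanishing:
  fixes c :: "'a::{field, finite}"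
  assumes char: "CHAR('a) = 2" and card: "card (UNIV :: 'a set) = 4 ^ (2 * m + 1)" and "0 < m"
  shows "\<exists>w. trace_F4 (2 * m + 1) (1 + w ^ 2 + c * w ^ (2 * 4 ^ m + 1)) = 0"
proof -
  define q :: nat where "q = 2 * 4 ^ m"
  let ?T = "trace_F4 (2 * m + 1) :: 'a \<Rightarrow> 'a"
  define S where "S = {w. ?T (c * w ^ (q + 1)) = 1}"
  have "card (UNIV :: 'a set) = q ^ 2"
    using card by (simp add: q_def power2_eq_square power_add power_mult algebra_simps)
  then have "q + 1 dvd card S"
    by (rule dvd_card_if_norm_closed) (auto simp: S_def)
  moreover have "card {w. ?T w \<noteq> 0} = 3 * 4 ^ (2 * m)"
  proof -
    have "{w. ?T w \<noteq> 0} = UNIV - {w. ?T w = 0}"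
      by auto
    then show ?thesis
      using card range_linearized_eq_trace_F4_kernel(2)[OF char card] by (simp add: card_Diff_subset)
  qed
  ultimately have "S \<noteq> {w. ?T w \<noteq> 0}"
    using two_mult_four_power_plus_1_not_dvd[OF \<open>0 < m\<close>] by (auto simp: q_def)
  then obtain w where "?T w = 0 \<and> ?T (c * w ^ (q + 1)) = 1 \<or> ?T w \<noteq> 0 \<and> ?T (c * w ^ (q + 1)) \<noteq> 1"
    by (auto simp: S_def)
  then have "\<exists>w. ?T (1 + w ^ 2 + c * w ^ (q + 1)) = 0"
  proof
    assume "?T w = 0 \<and> ?T (c * w ^ (q + 1)) = 1"
    then have "?T (1 + w ^ 2 + c * w ^ (q + 1)) = 1 + 1"
      using trace_F4_one_odd[OF char, of "2 * m + 1"]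
      by (simp add: trace_F4_add[OF char] trace_F4_power2[OF char])
    then show ?thesis
      using add_self_CHAR_2[OF char] by metis
  next
    assume "?T w \<noteq> 0 \<and> ?T (c * w ^ (q + 1)) \<noteq> 1"
    moreover have "3 dvd q + 1"
      using four_power_mod_3[of m] by (simp add: q_def) presburger
    ultimately show ?thesis
      by (intro exists_trace_F4_vanishing_if_trace_nonzero[OF char card]) auto
  qed
  then show ?thesis
    by (simp add: q_def)
qed

lemma collision_witness_odd:
  fixes c :: "'a::{field, finite}"
  assumes char: "CHAR('a) = 2" and card: "card (UNIV :: 'a set) = 4 ^ (2 * m + 1)" and "0 < m"
  shows "\<exists>w z. w \<noteq> 0 \<and> z ^ (2 * 4 ^ m) + z ^ 2 = 1 + w ^ 2 + c * w ^ (2 * 4 ^ m + 1)"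
proof -
  obtain w :: 'a where w: "trace_F4 (2 * m + 1) (1 + w ^ 2 + c * w ^ (2 * 4 ^ m + 1)) = 0"
    using exists_trace_F4_vanishing[OF assms] by blast
  have "trace_F4 (2 * m + 1) (1::'a) = 1"
    using char by (rule trace_F4_one_odd) simp
  with w have "w \<noteq> 0"
    by (auto simp: power_0_left)
  moreover have "1 + w ^ 2 + c * w ^ (2 * 4 ^ m + 1) \<in> range (\<lambda>z. z ^ (2 * 4 ^ m) + z ^ 2)"
    using w by (simp add: range_linearized_eq_trace_F4_kernel(1)[OF char card])
  then obtain z where "1 + w ^ 2 + c * w ^ (2 * 4 ^ m + 1) = z ^ (2 * 4 ^ m) + z ^ 2"
    by blast
  ultimately show ?thesis
    by metis
qed

lemma collision_witness_even:
  fixes c \<omega> :: "'a::field"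
  assumes char: "CHAR('a) = 2" and \<omega>: "\<omega> ^ 2 + \<omega> + 1 = 0"
  shows "\<exists>w z. w \<noteq> 0 \<and> z ^ 4 ^ j + z ^ 2 = 1 + w ^ 2 + c * w ^ (4 ^ j + 1)"
proof (cases "c = 0")
  case True
  then have "(0::'a) ^ 4 ^ j + 0 ^ 2 = 1 + 1 ^ 2 + c * 1 ^ (4 ^ j + 1)"
    using add_self_CHAR_2[OF char, of 1] by (simp add: power_0_left)
  then show ?thesis
    using one_neq_zero by blast
next
  case False
  have "\<omega> ^ 4 = \<omega>"
  proof -
    have "\<omega> ^ 4 - \<omega> = \<omega> * (\<omega> - 1) * (\<omega> ^ 2 + \<omega> + 1)"
      by (simp add: algebra_simps power2_eq_square power3_eq_cube power4_eq_xxxx)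
    then show ?thesis
      using \<omega> by simp
  qed
  then have "\<omega> ^ 4 ^ j + \<omega> ^ 2 = 1"
    using \<omega> uminus_CHAR_2[OF char, of 1] power_power_eq_self[of \<omega> 4 j]
    by (simp add: add_eq_0_iff algebra_simps)
  define w where "w = 1 / c"
  have "(w + \<omega>) ^ 4 ^ j + (w + \<omega>) ^ 2 = w ^ 4 ^ j + w ^ 2 + (\<omega> ^ 4 ^ j + \<omega> ^ 2)"
  proof -
    have "(w + \<omega>) ^ 4 ^ j = w ^ 4 ^ j + \<omega> ^ 4 ^ j"
      using char by (rule add_power_CHAR_2[where n = "2 * j"]) (simp add: power_mult)
    moreover have "(w + \<omega>) ^ 2 = w ^ 2 + \<omega> ^ 2"
      using char by (rule add_power_CHAR_2[where n = 1]) simp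
    ultimately show ?thesis
      by (simp add: algebra_simps)
  qed
  also have "\<dots> = 1 + w ^ 2 + c * w ^ (4 ^ j + 1)"
    using \<open>\<omega> ^ 4 ^ j + \<omega> ^ 2 = 1\<close> False by (simp add: w_def power_add field_simps)
  finally show ?thesis
    using False unfolding w_def by (metis divide_eq_0_iff one_neq_zero)
qed

lemma collision_witness:
  fixes c :: "'a::{field, finite}"
  assumes char: "CHAR('a) = 2" and card: "card (UNIV :: 'a set) = q ^ 2"
    and "q = 2 ^ k" and "1 < k"
  shows "\<exists>w z. w \<noteq> 0 \<and> z ^ q + z ^ 2 = 1 + w ^ 2 + c * w ^ (q + 1)"
proof (cases "even k")
  case True
  then obtain j where "k = 2 * j"
    by blast
  then have "q = 4 ^ j"
    using \<open>q = 2 ^ k\<close> by (simp add: power_mult)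
  moreover have "card (UNIV :: 'a set) = 4 ^ (2 * j)"
    using card \<open>q = 4 ^ j\<close> by (metis power_mult mult.commute)
  then have "3 dvd card (UNIV :: 'a set) - 1"
    using four_power_mod_3[of "2 * j"] by (metis dvd_minus_mod)
  then obtain \<omega> :: 'a where "\<omega> ^ 2 + \<omega> + 1 = 0"
    using exists_primitive_cube_root_of_unity by blast
  ultimately show ?thesis
    using collision_witness_even[OF char] by blast
next
  case False
  then obtain m where "k = 2 * m + 1"
    using oddE by blast
  then have "q = 2 * 4 ^ m" and "0 < m"
    using \<open>q = 2 ^ k\<close> \<open>1 < k\<close> by (simp_all add: power_mult)
  moreover have "card (UNIV :: 'a set) = 4 ^ (2 * m + 1)"
    using card \<open>q = 2 * 4 ^ m\<close> by (simp add: power2_eq_square power_add power_mult algebra_simps)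
  ultimately show ?thesis
    using collision_witness_odd[OF char] by blast
qed

subsection \<open>Collisions\<close>

lemma shift_difference_CHAR_2:
  fixes x d c :: "'a::comm_ring_1"
  assumes char: "CHAR('a) = 2" and "q = 2 ^ k"
  shows "(x + d) ^ (q + 2) + (x + d) ^ q + c * (x + d)
    = (x ^ (q + 2) + x ^ q + c * x) + (d ^ 2 * x ^ q + d ^ q * x ^ 2 + d ^ (q + 2) + d ^ q + c * d)"
proof -
  have "(x + d) ^ q = x ^ q + d ^ q"
    using char \<open>q = 2 ^ k\<close> by (rule add_power_CHAR_2)
  moreover have "(x + d) ^ 2 = x ^ 2 + d ^ 2"
    using char by (rule add_power_CHAR_2[where n = 1]) simp
  ultimately show ?thesis
    using two_eq_zero_CHAR_2[OF char] by (simp add: power_add power2_eq_square algebra_simps)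
qed

lemma collision_from_witness:
  fixes c d w z :: "'a::field"
  assumes char: "CHAR('a) = 2" and "q = 2 ^ k" and "d * w = 1"
    and wz: "z ^ q + z ^ 2 = 1 + w ^ 2 + c * w ^ (q + 1)"
  shows "(z * d + d) ^ (q + 2) + (z * d + d) ^ q + c * (z * d + d)
    = (z * d) ^ (q + 2) + (z * d) ^ q + c * (z * d)"
proof -
  have A: "d ^ 2 * (z * d) ^ q = d ^ (q + 2) * z ^ q"
    and B: "d ^ q * (z * d) ^ 2 = d ^ (q + 2) * z ^ 2"
    by (simp_all add: power_add power_mult_distrib power2_eq_square algebra_simps)
  have C: "d ^ q = d ^ (q + 2) * w ^ 2"
  proof -
    have "d ^ (q + 2) * w ^ 2 = d ^ q * (d * w) ^ 2"
      by (simp add: power_add power_mult_distrib power2_eq_square)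
    then show ?thesis
      using \<open>d * w = 1\<close> by simp
  qed
  have D: "c * d = d ^ (q + 2) * (c * w ^ (q + 1))"
  proof -
    have "d ^ (q + 2) * w ^ (q + 1) = d * (d * w) ^ (q + 1)"
      by (simp add: power_add power_mult_distrib algebra_simps)
    then show ?thesis
      using \<open>d * w = 1\<close> by simp
  qed
  have "d ^ 2 * (z * d) ^ q + d ^ q * (z * d) ^ 2 + d ^ (q + 2) + d ^ q + c * d
      = d ^ (q + 2) * z ^ q + d ^ (q + 2) * z ^ 2 + d ^ (q + 2) + d ^ (q + 2) * w ^ 2
        + d ^ (q + 2) * (c * w ^ (q + 1))"
    by (simp only: A B D, simp only: C)
  also have "\<dots> = d ^ (q + 2) * ((z ^ q + z ^ 2) + (1 + w ^ 2 + c * w ^ (q + 1)))"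
    by (simp add: algebra_simps)
  also have "\<dots> = 0"
    by (simp only: wz add_self_CHAR_2[OF char] mult_zero_right)
  finally show ?thesis
    using shift_difference_CHAR_2[OF char \<open>q = 2 ^ k\<close>, of "z * d" d c] by simp
qed

lemma not_inj_normalized:
  fixes c :: "'a::{field, finite}"
  assumes card: "card (UNIV :: 'a set) = q ^ 2" and "q = 2 ^ k" and "1 < k"
  shows "\<not> inj (\<lambda>x::'a. x ^ (q + 2) + x ^ q + c * x)"
proof
  assume inj: "inj (\<lambda>x::'a. x ^ (q + 2) + x ^ q + c * x)"
  have char: "CHAR('a) = 2"
    using assms by (intro CHAR_eq_2_if_card_even) simp
  obtain w z :: 'a where "w \<noteq> 0" and wz: "z ^ q + z ^ 2 = 1 + w ^ 2 + c * w ^ (q + 1)"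
    using collision_witness[OF char assms] by blast
  define d where "d = 1 / w"
  have "d * w = 1"
    using \<open>w \<noteq> 0\<close> by (simp add: d_def)
  then have "(z * d + d) ^ (q + 2) + (z * d + d) ^ q + c * (z * d + d)
      = (z * d) ^ (q + 2) + (z * d) ^ q + c * (z * d)"
    using char \<open>q = 2 ^ k\<close> wz by (intro collision_from_witness)
  then have "z * d + d = z * d"
    by (rule injD[OF inj])
  then show False
    using \<open>d * w = 1\<close> by simp
qed

lemma inj_normalized_if_inj:
  fixes b c \<beta> :: "'a::field"
  assumes "\<beta> ^ 2 = b" and "\<beta> \<noteq> 0" and inj: "inj (\<lambda>x::'a. x ^ (q + 2) + b * x ^ q + c * x)"
  shows "inj (\<lambda>t::'a. t ^ (q + 2) + t ^ q + c / \<beta> ^ (q + 1) * t)"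
proof (rule injI)
  have scaled: "(\<beta> * t) ^ (q + 2) + b * (\<beta> * t) ^ q + c * (\<beta> * t)
      = \<beta> ^ (q + 2) * (t ^ (q + 2) + t ^ q + c / \<beta> ^ (q + 1) * t)" for t
  proof -
    have "b * (\<beta> * t) ^ q = \<beta> ^ (q + 2) * t ^ q"
      using assms(1) by (simp add: power_add power_mult_distrib power2_eq_square algebra_simps)
    moreover have "c * (\<beta> * t) = \<beta> ^ (q + 2) * (c / \<beta> ^ (q + 1) * t)"
      using assms(2) by (simp add: power_add field_simps)
    ultimately show ?thesis
      by (simp add: power_mult_distrib distrib_left)
  qed
  fix s t :: 'a
  assume "s ^ (q + 2) + s ^ q + c / \<beta> ^ (q + 1) * s = t ^ (q + 2) + t ^ q + c / \<beta> ^ (q + 1) * t"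
  then have "(\<beta> * s) ^ (q + 2) + b * (\<beta> * s) ^ q + c * (\<beta> * s)
      = (\<beta> * t) ^ (q + 2) + b * (\<beta> * t) ^ q + c * (\<beta> * t)"
    by (simp only: scaled)
  then have "\<beta> * s = \<beta> * t"
    by (rule injD[OF inj])
  then show "s = t"
    using \<open>\<beta> \<noteq> 0\<close> by simp
qed

theorem lemma2p4:
  fixes b c :: "'a :: {field, finite}" and q k :: nat
  assumes "q = 2 ^ k" and "k > 1" and "card (UNIV :: 'a set) = q ^ 2" and "b \<noteq> 0"
  shows "\<not> bij (\<lambda>x::'a. x ^ (q + 2) + b * x ^ q + c * x)"
proof
  assume "bij (\<lambda>x::'a. x ^ (q + 2) + b * x ^ q + c * x)"
  then have inj: "inj (\<lambda>x::'a. x ^ (q + 2) + b * x ^ q + c * x)"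
    by (rule bij_is_inj)
  have "CHAR('a) = 2"
    using assms(1-3) by (intro CHAR_eq_2_if_card_even) simp
  then obtain \<beta> :: 'a where "\<beta> ^ 2 = b"
    using surj_power2_CHAR_2 by (metis surjD)
  moreover have "\<beta> \<noteq> 0"
    using \<open>\<beta> ^ 2 = b\<close> \<open>b \<noteq> 0\<close> by auto
  ultimately have "inj (\<lambda>t::'a. t ^ (q + 2) + t ^ q + c / \<beta> ^ (q + 1) * t)"
    using inj by (rule inj_normalized_if_inj)
  then show False
    using not_inj_normalized assms(1-3) by blast
qed

end
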